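(* Let $A\in\mathbb{R}^{n\times n}$, $B\in\mathbb{R}^{n\times m}$ with $(A,B)$ stabilizable, $Q\succ0$, $R\succ0$, $\alpha>1$, $\gamma,\eta\ge 0$, and let $\tilde F,\tilde P,V$ be as in the context. Consider $\dot x=Ax+Bu$, $x(0)=x_0$, under $u(t)=F_kx_k$ for $t\in[t_k,t_{k+1})$, $\delta_k=t_{k+1}-t_k$, $0=t_0<t_1<\cdots$. If for every $k$ the pair $(F_k,\delta_k)$ is a feasible solution of problem (P1) below (with the current state $x_k$), then the resulting control law is stabilizing and, for all nonzero $x_0$, $\nu(x_0)\le\alpha-1$. Problem (P1), for given $x_k$: minimize over $F_k\in\mathbb{R}^{m\times n}$, $\delta_k$ the objective $-\delta_k+\gamma\|F_k\|_0+\eta\|u_k\|_0$ with $u_k=F_kx_k$, subject to the dynamics with the held input $u(t)=F_kx_k$ and the constraint $J_k(F_k,\xi;x_k)\le\alpha\big(V(x_k)-V(x(t_k+\xi))\big)$ for all $\xi\in[0,\delta_k]$.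
   Context: $x_k:=x(t_k)$. $\tilde F\in\mathbb{R}^{m\times n}$ is a fixed gain with $A+B\tilde F$ Hurwitz, $\tilde P\succ0$ is the unique solution of $(A+B\tilde F)^T\tilde P+\tilde P(A+B\tilde F)+Q+\tilde F^TR\tilde F=0$, and $V(x):=x^T\tilde Px$. $\|M\|_0$ denotes the number of nonzero entries of a matrix or vector $M$. For $\xi\ge0$, $J_k(F_k,\xi;x_k):=\int_{t_k}^{t_k+\xi}(x^TQx+u^TRu)\,dt$ with $x$ the trajectory from $x(t_k)=x_k$ under the held input $u=F_kx_k$. $J(x_0):=\sum_{k\ge0}J_k(F_k,\delta_k;x_k)$, $\tilde J(x_0):=x_0^T\tilde Px_0$, $\nu(x_0):=(J(x_0)-\tilde J(x_0))/\tilde J(x_0)$. *)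

theory Defs
  imports "HOL-Analysis.Analysis"
begin

definition quad :: "real^'n^'n \<Rightarrow> real^'n \<Rightarrow> real" where
  "quad M x = x \<bullet> (M *v x)"

definition pos_def_mat :: "real^'n^'n \<Rightarrow> bool" where
  "pos_def_mat M \<longleftrightarrow> transpose M = M \<and> (\<forall>x. x \<noteq> 0 \<longrightarrow> 0 < quad M x)"

definition hurwitz :: "real^'n^'n \<Rightarrow> bool" where
  "hurwitz M \<longleftrightarrow>
     (\<forall>(l::complex) (v::complex^'n). v \<noteq> 0 \<and>
        (\<chi> i j. complex_of_real (M $ i $ j)) *v v = l *s v \<longrightarrow> Re l < 0)"

definition stabilizable :: "real^'n^'n \<Rightarrow> real^'m^'n \<Rightarrow> bool" where
  "stabilizable A B \<longleftrightarrow> (\<exists>K::real^'n^'m. hurwitz (A + B ** K))"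

definition held_input_traj ::
  "real^'n^'n \<Rightarrow> real^'m^'n \<Rightarrow> real^'m \<Rightarrow> (real \<Rightarrow> real^'n) \<Rightarrow> real \<Rightarrow> real \<Rightarrow> bool" where
  "held_input_traj A B u y a b \<longleftrightarrow>
     (\<forall>s\<in>{a..b}. (y has_vector_derivative (A *v y s + B *v u)) (at s within {a..b}))"

text \<open>J_k(F,xi;xk) computed along a trajectory y with y 0 = xk (time shifted so that t_k = 0).\<close>
definition Jk :: "real^'n^'n \<Rightarrow> real^'m^'m \<Rightarrow> real^'n^'m \<Rightarrow> (real \<Rightarrow> real^'n) \<Rightarrow> real \<Rightarrow> real" where
  "Jk Q R F y \<xi> = integral {0..\<xi>} (\<lambda>s. quad Q (y s) + quad R (F *v y 0))"

text \<open>The objective (involving \<gamma>, \<eta>) does not affect feasibility.\<close>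
definition P1_feasible ::
  "real^'n^'n \<Rightarrow> real^'m^'n \<Rightarrow> real^'n^'n \<Rightarrow> real^'m^'m \<Rightarrow> real \<Rightarrow> real^'n^'n
   \<Rightarrow> real^'n \<Rightarrow> real^'n^'m \<Rightarrow> real \<Rightarrow> (real \<Rightarrow> real^'n) \<Rightarrow> bool" where
  "P1_feasible A B Q R \<alpha> P xk F \<delta> y \<longleftrightarrow>
     y 0 = xk \<and> held_input_traj A B (F *v xk) y 0 \<delta> \<and>
     (\<forall>\<xi>\<in>{0..\<delta>}. Jk Q R F y \<xi> \<le> \<alpha> * (quad P xk - quad P (y \<xi>)))"

definition sample_hold_traj ::
  "real^'n^'n \<Rightarrow> real^'m^'n \<Rightarrow> (nat \<Rightarrow> real) \<Rightarrow> (nat \<Rightarrow> real^'n^'m) \<Rightarrow> real^'n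
   \<Rightarrow> (real \<Rightarrow> real^'n) \<Rightarrow> bool" where
  "sample_hold_traj A B t F x0 x \<longleftrightarrow>
     t 0 = 0 \<and> strict_mono t \<and> filterlim t at_top sequentially \<and> x 0 = x0 \<and>
     (\<forall>k. held_input_traj A B (F k *v x (t k)) x (t k) (t (Suc k)))"

definition total_cost ::
  "real^'n^'n \<Rightarrow> real^'m^'m \<Rightarrow> (nat \<Rightarrow> real) \<Rightarrow> (nat \<Rightarrow> real^'n^'m) \<Rightarrow> (real \<Rightarrow> real^'n) \<Rightarrow> nat \<Rightarrow> real" where
  "total_cost Q R t F x k = Jk Q R (F k) (\<lambda>s. x (t k + s)) (t (Suc k) - t k)"

definition nu :: "real \<Rightarrow> real^'n^'n \<Rightarrow> real^'n \<Rightarrow> real" where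
  "nu J P x0 = (J - quad P x0) / quad P x0"

end

(*
  V(x) = x' P x, with P the solution of the Lyapunov equation for A + B Ft, is a Lyapunov
  function for the sampled closed loop.

  P is positive definite: triangularise A + B Ft = U T U^-1 (complex Schur form). The
  Lyapunov inequality turns into one for the Hermitian form U^* P U with respect to the
  triangular T; testing it on the first unit vector makes the first pivot positive, and the
  Schur complement of that pivot satisfies the same inequality one dimension lower.

  Feasibility of (P1) makes V nonincreasing along the closed loop and bounds the cost of every
  sampling interval by alpha times the decrease of V. The costs therefore telescope to at most
  alpha V(x0), which is nu(x0) <= alpha - 1, and V(x(s)) <= V(x0) bounds ||x(s)|| uniformly.

  If V(x(t_k)) stayed above some eps > 0, every sampling interval would cost at least
  c min(delta_k, h): either the held input is small and the state stays away from the origin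
  for a time min(delta_k, h), or it is large and the input cost alone is that big. Summable
  costs would then force sum delta_k < oo, contradicting t_k --> oo.
*)

theory Submission
  imports Defs "Jordan_Normal_Form.Schur_Decomposition"
begin

no_notation vec_index (infixl "$" 100)
no_notation scalar_prod (infix "\<bullet>" 70)

section \<open>Hermitian forms and triangular Lyapunov inequalities\<close>

(* Complex n-vectors and n x n matrices are functions on nat of which only the indices below n
   are read. *)
definition sesq_form ::
    "nat \<Rightarrow> (nat \<Rightarrow> nat \<Rightarrow> complex) \<Rightarrow> (nat \<Rightarrow> complex) \<Rightarrow> (nat \<Rightarrow> complex) \<Rightarrow> complex"
  where
  "sesq_form n H v w = (\<Sum>i<n. \<Sum>j<n. cnj (v i) * H i j * w j)"

definition mat_app :: "nat \<Rightarrow> (nat \<Rightarrow> nat \<Rightarrow> complex) \<Rightarrow> (nat \<Rightarrow> complex) \<Rightarrow> nat \<Rightarrow> complex"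
  where
  "mat_app n T v i = (\<Sum>j<n. T i j * v j)"

lemma sesq_form_cong:
  "(\<And>i. i < n \<Longrightarrow> v i = v' i) \<Longrightarrow> (\<And>i. i < n \<Longrightarrow> w i = w' i) \<Longrightarrow>
   sesq_form n H v w = sesq_form n H v' w'"
  unfolding sesq_form_def by (intro sum.cong refl) auto

lemma sesq_form_mat_app_right:
  "sesq_form n S v (mat_app n M w) = sesq_form n (\<lambda>i j. \<Sum>k<n. S i k * M k j) v w"
  unfolding sesq_form_def mat_app_def sum_distrib_left sum_distrib_right
  by (rule sum.cong[OF refl], subst sum.swap) (simp add: mult_ac)

lemma sesq_form_mat_app_left:
  "sesq_form n S (mat_app n P v) w = sesq_form n (\<lambda>i j. \<Sum>k<n. cnj (P k i) * S k j) v w"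
proof -
  let ?f = "\<lambda>k j i. cnj (v i) * (cnj (P k i) * S k j) * w j"
  have "sesq_form n S (mat_app n P v) w = (\<Sum>k<n. \<Sum>j<n. \<Sum>i<n. ?f k j i)"
    unfolding sesq_form_def mat_app_def cnj_sum sum_distrib_left sum_distrib_right
    by (simp add: mult_ac)
  also have "\<dots> = (\<Sum>j<n. \<Sum>k<n. \<Sum>i<n. ?f k j i)"
    by (rule sum.swap)
  also have "\<dots> = (\<Sum>j<n. \<Sum>i<n. \<Sum>k<n. ?f k j i)"
    by (rule sum.cong[OF refl], rule sum.swap)
  also have "\<dots> = (\<Sum>i<n. \<Sum>j<n. \<Sum>k<n. ?f k j i)"
    by (rule sum.swap)
  finally show ?thesis
    unfolding sesq_form_def by (simp add: sum_distrib_left sum_distrib_right)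
qed

lemma mat_app_mat_app:
  "mat_app n X (mat_app n Y v) = mat_app n (\<lambda>i k. \<Sum>j<n. X i j * Y j k) v"
  unfolding mat_app_def sum_distrib_left sum_distrib_right
  by (intro ext, subst sum.swap) (simp add: mult_ac)

lemma sesq_form_Suc:
  "sesq_form (Suc n) H v w =
     cnj (v 0) * H 0 0 * w 0 + cnj (v 0) * (\<Sum>j<n. H 0 (Suc j) * w (Suc j))
     + (\<Sum>i<n. cnj (v (Suc i)) * H (Suc i) 0) * w 0
     + sesq_form n (\<lambda>i j. H (Suc i) (Suc j)) (\<lambda>i. v (Suc i)) (\<lambda>i. w (Suc i))"
  unfolding sesq_form_def sum.lessThan_Suc_shift
  by (simp add: sum.distrib sum_distrib_left sum_distrib_right algebra_simps)

definition schur_complement :: "(nat \<Rightarrow> nat \<Rightarrow> complex) \<Rightarrow> nat \<Rightarrow> nat \<Rightarrow> complex" where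
  "schur_complement H i j = H (Suc i) (Suc j) - H (Suc i) 0 * H 0 (Suc j) / H 0 0"

lemma sesq_form_schur_complement:
  fixes H :: "nat \<Rightarrow> nat \<Rightarrow> complex" and n :: nat
  defines "L \<equiv> \<lambda>y. \<Sum>j<n. H 0 (Suc j) * y j"
  assumes s: "H 0 0 \<noteq> 0" "cnj (H 0 0) = H 0 0"
    and herm: "\<And>j. j < n \<Longrightarrow> H (Suc j) 0 = cnj (H 0 (Suc j))"
  shows "sesq_form (Suc n) H v w =
    sesq_form n (schur_complement H) (\<lambda>i. v (Suc i)) (\<lambda>i. w (Suc i))
    + cnj (v 0 + L (\<lambda>i. v (Suc i)) / H 0 0) * H 0 0 * (w 0 + L (\<lambda>i. w (Suc i)) / H 0 0)"
proof -
  have col: "(\<Sum>i<n. cnj (y i) * H (Suc i) 0) = cnj (L y)" for y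
    unfolding L_def cnj_sum by (intro sum.cong refl) (simp add: herm mult.commute)
  have schur: "sesq_form n (schur_complement H) y z
      = sesq_form n (\<lambda>i j. H (Suc i) (Suc j)) y z - cnj (L y) * L z / H 0 0" for y z
    unfolding col[symmetric] unfolding sesq_form_def L_def schur_complement_def
    by (simp add: sum_subtractf sum_distrib_left sum_distrib_right sum_divide_distrib algebra_simps)
  have row: "(\<Sum>j<n. H 0 (Suc j) * y (Suc j)) = L (\<lambda>i. y (Suc i))" for y
    by (simp add: L_def)
  show ?thesis
    unfolding sesq_form_Suc col row schur using s
    by (simp add: field_simps)
qed

lemma lyapunov_pivot_pos:
  fixes T H :: "nat \<Rightarrow> nat \<Rightarrow> complex"
  assumes col: "\<And>j. 0 < j \<Longrightarrow> j < n \<Longrightarrow> T j 0 = 0" and n: "0 < n"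
    and T00: "Re (T 0 0) < 0" and H00: "cnj (H 0 0) = H 0 0"
    and lyap: "\<And>v. \<exists>i<n. v i \<noteq> 0 \<Longrightarrow> Re (sesq_form n H v (mat_app n T v)) < 0"
  shows "Re (H 0 0) > 0"
proof -
  obtain m where m: "n = Suc m" using n not0_implies_Suc by blast
  define e where "e = (\<lambda>i::nat. if i = 0 then 1 else (0::complex))"
  have Te: "mat_app n T e j = T j 0" for j
    unfolding mat_app_def e_def using n by (simp add: if_distrib cong: if_cong)
  have "sesq_form n H e (mat_app n T e) = H 0 0 * T 0 0"
    unfolding m sesq_form_Suc unfolding Te[unfolded m] using col[unfolded m]
    by (simp add: e_def sesq_form_def)
  moreover have "Re (sesq_form n H e (mat_app n T e)) < 0"
    using lyap n by (metis e_def one_neq_zero)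
  moreover have "Im (H 0 0) = 0"
    using H00 by (metis cnj.sel(2) neg_equal_zero)
  ultimately have "Re (H 0 0) * Re (T 0 0) < 0" by simp
  then show ?thesis using T00 by (simp add: mult_less_0_iff)
qed

lemma schur_complement_lyapunov:
  fixes T H :: "nat \<Rightarrow> nat \<Rightarrow> complex" and n :: nat
  assumes tri: "\<And>i j. j < i \<Longrightarrow> i < Suc n \<Longrightarrow> T i j = 0"
    and herm: "\<And>i j. i < Suc n \<Longrightarrow> j < Suc n \<Longrightarrow> H j i = cnj (H i j)"
    and lyap: "\<And>v. \<exists>i<Suc n. v i \<noteq> 0 \<Longrightarrow> Re (sesq_form (Suc n) H v (mat_app (Suc n) T v)) < 0"
    and s: "H 0 0 \<noteq> 0"
  shows "\<And>i j. i < n \<Longrightarrow> j < n \<Longrightarrow> schur_complement H j i = cnj (schur_complement H i j)"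
    and "\<And>z. \<exists>i<n. z i \<noteq> 0 \<Longrightarrow>
      Re (sesq_form n (schur_complement H) z (mat_app n (\<lambda>i j. T (Suc i) (Suc j)) z)) < 0"
proof -
  have s_real: "cnj (H 0 0) = H 0 0"
    using herm[of 0 0] by simp
  have herm_col: "H (Suc j) 0 = cnj (H 0 (Suc j))" if "j < n" for j
    using herm[of 0 "Suc j"] that by simp
  show "schur_complement H j i = cnj (schur_complement H i j)" if "i < n" "j < n" for i j
    using herm[of "Suc i" "Suc j"] herm[of 0 "Suc j"] herm[of "Suc i" 0] s_real that
    by (simp add: schur_complement_def mult.commute)
  show "Re (sesq_form n (schur_complement H) z (mat_app n (\<lambda>i j. T (Suc i) (Suc j)) z)) < 0"
    if "\<exists>i<n. z i \<noteq> 0" for z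
  proof -
    define L where "L = (\<lambda>y. \<Sum>j<n. H 0 (Suc j) * y j)"
    define v where "v = (\<lambda>i. if i = 0 then - L z / H 0 0 else z (i - 1))"
    have tail: "mat_app (Suc n) T v (Suc i) = mat_app n (\<lambda>i j. T (Suc i) (Suc j)) z i" if "i < n" for i
      unfolding mat_app_def sum.lessThan_Suc_shift using tri[of 0 "Suc i"] that by (simp add: v_def)
    have "sesq_form (Suc n) H v (mat_app (Suc n) T v)
        = sesq_form n (schur_complement H) (\<lambda>i. v (Suc i)) (\<lambda>i. mat_app (Suc n) T v (Suc i))"
      using sesq_form_schur_complement[where v = v and w = "mat_app (Suc n) T v", OF s s_real herm_col] s
      by (simp add: v_def L_def)
    also have "\<dots> = sesq_form n (schur_complement H) z (mat_app n (\<lambda>i j. T (Suc i) (Suc j)) z)"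
      using tail by (intro sesq_form_cong) (simp_all add: v_def)
    finally have "sesq_form (Suc n) H v (mat_app (Suc n) T v)
        = sesq_form n (schur_complement H) z (mat_app n (\<lambda>i j. T (Suc i) (Suc j)) z)" .
    moreover have "\<exists>i<Suc n. v i \<noteq> 0"
      using that by (auto simp: v_def)
    ultimately show ?thesis
      using lyap by metis
  qed
qed

lemma Re_sesq_form_schur_complement:
  fixes H :: "nat \<Rightarrow> nat \<Rightarrow> complex" and n :: nat
  assumes s: "H 0 0 \<noteq> 0" "cnj (H 0 0) = H 0 0"
    and herm: "\<And>j. j < n \<Longrightarrow> H (Suc j) 0 = cnj (H 0 (Suc j))"
  shows "Re (sesq_form (Suc n) H v v)
    = Re (sesq_form n (schur_complement H) (\<lambda>i. v (Suc i)) (\<lambda>i. v (Suc i)))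
      + Re (H 0 0) * (cmod (v 0 + (\<Sum>j<n. H 0 (Suc j) * v (Suc j)) / H 0 0))\<^sup>2"
proof -
  define z where "z = v 0 + (\<Sum>j<n. H 0 (Suc j) * v (Suc j)) / H 0 0"
  have "Re (cnj z * H 0 0 * z) = Re (H 0 0) * (cmod z)\<^sup>2"
    unfolding cmod_power2 by (simp add: power2_eq_square algebra_simps)
  then show ?thesis
    using sesq_form_schur_complement[where v = v and w = v, OF s herm] by (simp add: z_def)
qed

lemma triangular_lyapunov_pos:
  fixes T H :: "nat \<Rightarrow> nat \<Rightarrow> complex"
  assumes "\<And>i j. j < i \<Longrightarrow> i < n \<Longrightarrow> T i j = 0"
    and "\<And>i. i < n \<Longrightarrow> Re (T i i) < 0"
    and "\<And>i j. i < n \<Longrightarrow> j < n \<Longrightarrow> H j i = cnj (H i j)"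
    and "\<And>v. \<exists>i<n. v i \<noteq> 0 \<Longrightarrow> Re (sesq_form n H v (mat_app n T v)) < 0"
    and "\<exists>i<n. v i \<noteq> 0"
  shows "Re (sesq_form n H v v) > 0"
  using assms
proof (induction n arbitrary: T H v)
  case 0
  then show ?case by simp
next
  case (Suc n)
  note tri = Suc.prems(1) and diag = Suc.prems(2) and herm = Suc.prems(3)
    and lyap = Suc.prems(4)
  have s_real: "cnj (H 0 0) = H 0 0"
    using herm[of 0 0] by simp
  have pivot: "Re (H 0 0) > 0"
    by (rule lyapunov_pivot_pos[where n = "Suc n" and T = T]) (use tri diag s_real lyap in auto)
  then have "H 0 0 \<noteq> 0" by auto
  have herm_col: "H (Suc j) 0 = cnj (H 0 (Suc j))" if "j < n" for j
    using herm[of 0 "Suc j"] that by simp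
  have complement_pos: "Re (sesq_form n (schur_complement H) y y) > 0" if "\<exists>i<n. y i \<noteq> 0" for y
    using Suc.IH[OF _ _ schur_complement_lyapunov[OF tri herm lyap \<open>H 0 0 \<noteq> 0\<close>] that] tri diag
    by simp
  note form = Re_sesq_form_schur_complement[where v = v, OF \<open>H 0 0 \<noteq> 0\<close> s_real herm_col]
  show ?case
  proof (cases "\<exists>i<n. v (Suc i) \<noteq> 0")
    case True
    then show ?thesis
      using complement_pos form pivot by (simp add: add_pos_nonneg)
  next
    case False
    then have "sesq_form n (schur_complement H) (\<lambda>i. v (Suc i)) (\<lambda>i. v (Suc i)) = 0"
      "(\<Sum>j<n. H 0 (Suc j) * v (Suc j)) = 0" "v 0 \<noteq> 0"
      using Suc.prems(5) by (auto simp: sesq_form_def less_Suc_eq_0_disj)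
    then show ?thesis
      using form pivot by simp
  qed
qed

section \<open>Lyapunov's theorem\<close>

lemma mat_app_mult_mat:
  assumes "X \<in> carrier_mat n n" "Y \<in> carrier_mat n n" "i < n"
  shows "mat_app n (\<lambda>i j. X $$ (i,j)) (mat_app n (\<lambda>i j. Y $$ (i,j)) v) i
       = mat_app n (\<lambda>i j. (X * Y) $$ (i,j)) v i"
  unfolding mat_app_mat_app mat_app_def using assms
  by (intro sum.cong refl) (simp add: scalar_prod_def lessThan_atLeast0)

lemma mat_app_one_mat:
  assumes "i < n"
  shows "mat_app n (\<lambda>i j. (1\<^sub>m n) $$ (i,j)) v i = v i"
proof -
  have "mat_app n (\<lambda>i j. (1\<^sub>m n) $$ (i,j)) v i = (\<Sum>j<n. if i = j then v j else 0)"
    unfolding mat_app_def using assms by (intro sum.cong refl) auto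
  then show ?thesis using assms by simp
qed

lemma complex_schur_form:
  fixes A :: "complex mat"
  assumes A: "A \<in> carrier_mat n n"
  obtains B P Q where "B \<in> carrier_mat n n" "P \<in> carrier_mat n n" "Q \<in> carrier_mat n n"
    "P * Q = 1\<^sub>m n" "Q * P = 1\<^sub>m n" "A * P = P * B" "upper_triangular B"
    "\<And>i. i < n \<Longrightarrow> eigenvalue A (B $$ (i,i))"
proof -
  obtain es where es: "char_poly A = (\<Prod>e\<leftarrow>es. [:- e, 1:])"
    using char_poly_factorized[OF A] by blast
  obtain B P Q where "schur_decomposition A es = (B, P, Q)"
    by (cases "schur_decomposition A es")
  then have "similar_mat_wit A B P Q" "upper_triangular B" "diag_mat B = es"
    using schur_decomposition[OF A es] by auto
  then have B: "B \<in> carrier_mat n n" and P: "P \<in> carrier_mat n n" and Q: "Q \<in> carrier_mat n n"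
    and PQ: "P * Q = 1\<^sub>m n" and QP: "Q * P = 1\<^sub>m n" and APQ: "A = P * B * Q"
    and tri: "upper_triangular B" and diag: "diag_mat B = es"
    using A unfolding similar_mat_wit_def Let_def by auto
  have "A * P = P * B * (Q * P)"
    unfolding APQ using B P Q by (simp add: assoc_mult_mat[of _ n n _ n _ n])
  then have AP: "A * P = P * B"
    unfolding QP using B P by simp
  have eig: "eigenvalue A (B $$ (i,i))" if "i < n" for i
  proof -
    have "B $$ (i,i) \<in> set es"
      using diag B that unfolding diag_mat_def by auto
    then have "poly (char_poly A) (B $$ (i,i)) = 0"
      unfolding es by (simp add: poly_prod_list)
    then show ?thesis
      using eigenvalue_root_char_poly[OF A] by simp
  qed
  show thesis
    by (rule that[OF B P Q PQ QP AP tri]) (rule eig)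
qed

lemma schur_triangularization:
  fixes M :: "nat \<Rightarrow> nat \<Rightarrow> complex" and n :: nat
  obtains T P P' :: "nat \<Rightarrow> nat \<Rightarrow> complex" where
    "\<And>i j. j < i \<Longrightarrow> i < n \<Longrightarrow> T i j = 0"
    "\<And>i. i < n \<Longrightarrow> eigenvalue (Matrix.mat n n (\<lambda>(i,j). M i j)) (T i i)"
    "\<And>v i. i < n \<Longrightarrow> mat_app n P (mat_app n P' v) i = v i"
    "\<And>v i. i < n \<Longrightarrow> mat_app n P' (mat_app n P v) i = v i"
    "\<And>v i. i < n \<Longrightarrow> mat_app n M (mat_app n P v) i = mat_app n P (mat_app n T v) i"
proof -
  define A where "A = Matrix.mat n n (\<lambda>(i,j). M i j)"
  have A: "A \<in> carrier_mat n n" by (simp add: A_def)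
  obtain B P Q where B: "B \<in> carrier_mat n n" and P: "P \<in> carrier_mat n n"
    and Q: "Q \<in> carrier_mat n n" and PQ: "P * Q = 1\<^sub>m n" and QP: "Q * P = 1\<^sub>m n"
    and AP: "A * P = P * B" and tri: "upper_triangular B"
    and eig: "\<And>i. i < n \<Longrightarrow> eigenvalue A (B $$ (i,i))"
    using complex_schur_form[OF A] by blast
  show thesis
  proof (rule that[of "\<lambda>i j. B $$ (i,j)" "\<lambda>i j. P $$ (i,j)" "\<lambda>i j. Q $$ (i,j)"])
    show "B $$ (i,j) = 0" if "j < i" "i < n" for i j
      using tri B that unfolding upper_triangular_def by auto
    show "eigenvalue (Matrix.mat n n (\<lambda>(i,j). M i j)) (B $$ (i,i))" if "i < n" for i
      using eig[OF that] by (simp add: A_def)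
    show "mat_app n (\<lambda>i j. P $$ (i,j)) (mat_app n (\<lambda>i j. Q $$ (i,j)) v) i = v i" if "i < n" for v i
      using mat_app_mult_mat[OF P Q that] mat_app_one_mat[OF that] PQ by simp
    show "mat_app n (\<lambda>i j. Q $$ (i,j)) (mat_app n (\<lambda>i j. P $$ (i,j)) v) i = v i" if "i < n" for v i
      using mat_app_mult_mat[OF Q P that] mat_app_one_mat[OF that] QP by simp
    show "mat_app n M (mat_app n (\<lambda>i j. P $$ (i,j)) v) i
        = mat_app n (\<lambda>i j. P $$ (i,j)) (mat_app n (\<lambda>i j. B $$ (i,j)) v) i" if "i < n" for v i
    proof -
      have "mat_app n M w i = mat_app n (\<lambda>i j. A $$ (i,j)) w i" for w
        unfolding mat_app_def A_def using that by (intro sum.cong refl) simp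
      then show ?thesis
        using mat_app_mult_mat[OF A P that] mat_app_mult_mat[OF P B that] AP by simp
    qed
  qed
qed

lemma congruence_hermitian:
  fixes P S :: "nat \<Rightarrow> nat \<Rightarrow> complex"
  assumes herm: "\<And>i j. i < n \<Longrightarrow> j < n \<Longrightarrow> S j i = cnj (S i j)"
    and "i < n" "j < n"
  defines "H \<equiv> \<lambda>i j. \<Sum>k<n. cnj (P k i) * (\<Sum>l<n. S k l * P l j)"
  shows "H j i = cnj (H i j)"
proof -
  have cnj_S: "cnj (S k l) = S l k" if "k < n" "l < n" for k l
    using herm[OF that] by simp
  have "cnj (H i j) = (\<Sum>k<n. \<Sum>l<n. P k i * S l k * cnj (P l j))"
    unfolding H_def cnj_sum complex_cnj_mult sum_distrib_left
    by (intro sum.cong refl) (simp add: cnj_S mult_ac)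
  also have "\<dots> = (\<Sum>l<n. \<Sum>k<n. P k i * S l k * cnj (P l j))"
    by (rule sum.swap)
  finally show ?thesis
    unfolding H_def by (simp add: sum_distrib_left mult_ac)
qed

lemma hermitian_lyapunov_pos:
  fixes M S :: "nat \<Rightarrow> nat \<Rightarrow> complex"
  assumes eig: "\<And>l. eigenvalue (Matrix.mat n n (\<lambda>(i,j). M i j)) l \<Longrightarrow> Re l < 0"
    and herm: "\<And>i j. i < n \<Longrightarrow> j < n \<Longrightarrow> S j i = cnj (S i j)"
    and lyap: "\<And>u. \<exists>i<n. u i \<noteq> 0 \<Longrightarrow> Re (sesq_form n S u (mat_app n M u)) < 0"
    and u: "\<exists>i<n. u i \<noteq> 0"
  shows "Re (sesq_form n S u u) > 0"
proof -
  obtain T P P' where tri: "\<And>i j. j < i \<Longrightarrow> i < n \<Longrightarrow> T i j = 0"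
    and diag: "\<And>i. i < n \<Longrightarrow> eigenvalue (Matrix.mat n n (\<lambda>(i,j). M i j)) (T i i)"
    and PP': "\<And>v i. i < n \<Longrightarrow> mat_app n P (mat_app n P' v) i = v i"
    and P'P: "\<And>v i. i < n \<Longrightarrow> mat_app n P' (mat_app n P v) i = v i"
    and MP: "\<And>v i. i < n \<Longrightarrow> mat_app n M (mat_app n P v) i = mat_app n P (mat_app n T v) i"
    using schur_triangularization[where n = n and M = M] by blast
  define H where "H = (\<lambda>i j. \<Sum>k<n. cnj (P k i) * (\<Sum>l<n. S k l * P l j))"
  have H: "sesq_form n H v w = sesq_form n S (mat_app n P v) (mat_app n P w)" for v w
    unfolding sesq_form_mat_app_left sesq_form_mat_app_right H_def ..
  have P_nonzero: "\<exists>i<n. mat_app n P v i \<noteq> 0" if "\<exists>i<n. v i \<noteq> 0" for v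
  proof (rule ccontr)
    assume "\<not> (\<exists>i<n. mat_app n P v i \<noteq> 0)"
    then have "mat_app n P' (mat_app n P v) i = 0" for i
      by (simp add: mat_app_def)
    then show False using P'P that by metis
  qed
  have H_lyap: "Re (sesq_form n H w (mat_app n T w)) < 0" if "\<exists>i<n. w i \<noteq> 0" for w
  proof -
    have "sesq_form n H w (mat_app n T w)
        = sesq_form n S (mat_app n P w) (mat_app n M (mat_app n P w))"
      unfolding H using MP by (intro sesq_form_cong) simp_all
    then show ?thesis using lyap P_nonzero that by simp
  qed
  have H_herm: "H j i = cnj (H i j)" if "i < n" "j < n" for i j
    unfolding H_def by (rule congruence_hermitian[where P = P, OF herm that])
  have T_diag: "Re (T i i) < 0" if "i < n" for i
    using eig diag that by blast
  have "Re (sesq_form n H v v) > 0" if "\<exists>i<n. v i \<noteq> 0" for v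
    using triangular_lyapunov_pos[OF tri T_diag H_herm H_lyap that] .
  moreover have "\<exists>i<n. mat_app n P' u i \<noteq> 0"
    using u PP' by (metis (no_types, lifting) mat_app_def lessThan_iff mult_zero_right sum.neutral)
  moreover have "sesq_form n H (mat_app n P' u) (mat_app n P' u) = sesq_form n S u u"
    unfolding H using PP' by (intro sesq_form_cong) simp_all
  ultimately show ?thesis by metis
qed

lemma sum_UNIV_reindex:
  fixes h :: "nat \<Rightarrow> 'n::finite"
  assumes "bij_betw h {..<CARD('n)} UNIV"
  shows "(\<Sum>k\<in>UNIV. f k) = (\<Sum>i<CARD('n). f (h i))"
  using sum.reindex_bij_betw[OF assms, of f] by simp

lemma quad_reindex:
  fixes h :: "nat \<Rightarrow> 'n::finite" and K :: "real^'n^'n"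
  assumes "bij_betw h {..<CARD('n)} UNIV"
  shows "quad K x = (\<Sum>i<CARD('n). \<Sum>j<CARD('n). x $ h i * K $ h i $ h j * x $ h j)"
  unfolding quad_def inner_vec_def matrix_vector_mult_def
  by (simp add: sum_UNIV_reindex[OF assms] sum_distrib_left mult_ac)

lemma matrix_mult_reindex:
  fixes h :: "nat \<Rightarrow> 'n::finite" and X Y :: "real^'n^'n"
  assumes "bij_betw h {..<CARD('n)} UNIV"
  shows "(X ** Y) $ h i $ h j = (\<Sum>k<CARD('n). X $ h i $ h k * Y $ h k $ h j)"
  unfolding matrix_matrix_mult_def by (simp add: sum_UNIV_reindex[OF assms])

lemma bij_betw_lessThan_obtain_index:
  fixes h :: "nat \<Rightarrow> 'n::finite"
  assumes "bij_betw h {..<CARD('n)} UNIV"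
  obtains i where "i < CARD('n)" "k = h i"
  using bij_betw_imp_surj_on[OF assms] by (metis UNIV_I imageE lessThan_iff)

definition vec_of_fun :: "(nat \<Rightarrow> 'n::finite) \<Rightarrow> (nat \<Rightarrow> 'a) \<Rightarrow> 'a^'n" where
  "vec_of_fun h a = (\<chi> k. a (inv_into {..<CARD('n)} h k))"

lemma vec_of_fun_nth:
  assumes "bij_betw h {..<CARD('n::finite)} UNIV" "i < CARD('n)"
  shows "(vec_of_fun h a :: 'a^'n) $ h i = a i"
  unfolding vec_of_fun_def using bij_betw_inv_into_left[OF assms(1)] assms(2) by simp

lemma vec_of_fun_nonzero:
  fixes h :: "nat \<Rightarrow> 'n::finite"
  assumes "bij_betw h {..<CARD('n)} UNIV" "i < CARD('n)" "a i \<noteq> 0"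
  shows "vec_of_fun h a \<noteq> 0"
  using vec_of_fun_nth[OF assms(1,2)] assms(3) by (metis zero_index)

lemma vec_of_fun_comp_eq:
  fixes h :: "nat \<Rightarrow> 'n::finite" and x :: "'a^'n"
  assumes "bij_betw h {..<CARD('n)} UNIV"
  shows "vec_of_fun h (\<lambda>i. x $ h i) = x"
proof (subst Finite_Cartesian_Product.vec_eq_iff, rule allI)
  fix k
  obtain i where "i < CARD('n)" "k = h i"
    using bij_betw_lessThan_obtain_index[OF assms] by metis
  then show "vec_of_fun h (\<lambda>i. x $ h i) $ k = x $ k"
    using vec_of_fun_nth[OF assms] by simp
qed

lemma vec_of_fun_zero: "vec_of_fun h (\<lambda>i. 0) = 0"
  unfolding vec_of_fun_def by (simp add: Finite_Cartesian_Product.vec_eq_iff)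

lemma Re_sesq_form_of_real:
  "Re (sesq_form n (\<lambda>i j. complex_of_real (K i j)) u u)
     = (\<Sum>i<n. \<Sum>j<n. Re (u i) * K i j * Re (u j)) + (\<Sum>i<n. \<Sum>j<n. Im (u i) * K i j * Im (u j))"
  unfolding sesq_form_def Re_sum sum.distrib[symmetric] by (simp add: algebra_simps)

lemma Re_sesq_form_reindex:
  fixes h :: "nat \<Rightarrow> 'n::finite" and K :: "real^'n^'n"
  assumes h: "bij_betw h {..<CARD('n)} UNIV"
  shows "Re (sesq_form CARD('n) (\<lambda>i j. complex_of_real (K $ h i $ h j)) u u)
    = quad K (vec_of_fun h (\<lambda>i. Re (u i))) + quad K (vec_of_fun h (\<lambda>i. Im (u i)))"
proof -
  have "quad K (vec_of_fun h a) = (\<Sum>i<CARD('n). \<Sum>j<CARD('n). a i * K $ h i $ h j * a j)" for a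
    unfolding quad_reindex[OF h] by (intro sum.cong refl) (simp add: vec_of_fun_nth[OF h])
  then show ?thesis
    unfolding Re_sesq_form_of_real by simp
qed

lemma reindexed_lyapunov_neg:
  fixes M S :: "real^'n^'n" and h :: "nat \<Rightarrow> 'n"
  assumes h: "bij_betw h {..<CARD('n)} UNIV"
    and lyap: "\<And>y. y \<noteq> 0 \<Longrightarrow> quad (S ** M) y < 0"
    and u: "\<exists>i<CARD('n). u i \<noteq> 0"
  shows "Re (sesq_form CARD('n) (\<lambda>i j. complex_of_real (S $ h i $ h j)) u
    (mat_app CARD('n) (\<lambda>i j. complex_of_real (M $ h i $ h j)) u)) < 0"
proof -
  define a where "a = vec_of_fun h (\<lambda>i. Re (u i))"
  define b where "b = vec_of_fun h (\<lambda>i. Im (u i))"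
  have nonpos: "quad (S ** M) y \<le> 0" for y
    using lyap[of y] by (cases "y = 0") (auto simp: quad_def)
  have "sesq_form CARD('n) (\<lambda>i j. complex_of_real (S $ h i $ h j)) u
      (mat_app CARD('n) (\<lambda>i j. complex_of_real (M $ h i $ h j)) u)
    = sesq_form CARD('n) (\<lambda>i j. complex_of_real ((S ** M) $ h i $ h j)) u u"
    unfolding sesq_form_mat_app_right matrix_mult_reindex[OF h] of_real_sum of_real_mult ..
  then have "Re (sesq_form CARD('n) (\<lambda>i j. complex_of_real (S $ h i $ h j)) u
      (mat_app CARD('n) (\<lambda>i j. complex_of_real (M $ h i $ h j)) u)) = quad (S ** M) a + quad (S ** M) b"
    unfolding a_def b_def by (simp only: Re_sesq_form_reindex[OF h])
  moreover have "a \<noteq> 0 \<or> b \<noteq> 0"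
  proof -
    obtain i where "i < CARD('n)" "u i \<noteq> 0"
      using u by blast
    then have "Re (u i) \<noteq> 0 \<or> Im (u i) \<noteq> 0"
      using complex_eqI[of "u i" 0] by auto
    then show ?thesis
      unfolding a_def b_def
      using vec_of_fun_nonzero[OF h \<open>i < CARD('n)\<close>, of "\<lambda>i. Re (u i)"]
        vec_of_fun_nonzero[OF h \<open>i < CARD('n)\<close>, of "\<lambda>i. Im (u i)"] by blast
  qed
  ultimately show ?thesis
    using lyap[of a] lyap[of b] nonpos[of a] nonpos[of b] by linarith
qed

lemma inner_transpose_matrix: "(x::real^'n) \<bullet> (transpose A *v y) = (A *v x) \<bullet> y"
  by (metis dot_lmul_matrix inner_commute transpose_matrix_vector)

lemma quad_transpose: "quad (transpose P) x = quad P x"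
  unfolding quad_def inner_transpose_matrix by (simp add: inner_commute)

lemma quad_add: "quad (X + Y) x = quad X x + quad Y x"
  unfolding quad_def by (simp add: matrix_vector_mult_add_rdistrib inner_add_right)

lemma quad_transpose_mult: "quad (transpose F ** R ** F) x = quad R (F *v x)"
  unfolding quad_def matrix_vector_mul_assoc[symmetric] inner_transpose_matrix ..

lemma pos_def_mat_quad_nonneg: "pos_def_mat Q \<Longrightarrow> 0 \<le> quad Q x"
  unfolding pos_def_mat_def by (cases "x = 0") (auto simp: quad_def less_imp_le)

lemma hurwitz_eigenvalue_Re_neg:
  fixes M :: "real^'n^'n" and h :: "nat \<Rightarrow> 'n"
  assumes hur: "hurwitz M" and h: "bij_betw h {..<CARD('n)} UNIV"
    and eig: "eigenvalue (Matrix.mat CARD('n) CARD('n) (\<lambda>(i,j). complex_of_real (M $ h i $ h j))) l"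
  shows "Re l < 0"
proof -
  define N where "N = CARD('n)"
  define A where "A = Matrix.mat N N (\<lambda>(i,j). complex_of_real (M $ h i $ h j))"
  obtain v where "eigenvector A v l"
    using eig unfolding eigenvalue_def A_def N_def by blast
  then have v: "v \<in> carrier_vec N" "v \<noteq> 0\<^sub>v N" "A *\<^sub>v v = l \<cdot>\<^sub>v v"
    unfolding eigenvector_def A_def by auto
  define z :: "complex^'n" where "z = vec_of_fun h (vec_index v)"
  have z: "z $ h i = vec_index v i" if "i < N" for i
    unfolding z_def using vec_of_fun_nth[OF h] that N_def by simp
  obtain j where "j < N" "vec_index v j \<noteq> 0"
    using v(1,2) by (auto simp: Matrix.vec_eq_iff)
  then have "z \<noteq> 0"
    unfolding z_def N_def by (rule vec_of_fun_nonzero[OF h])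
  moreover have "(\<chi> i j. complex_of_real (M $ i $ j)) *v z = l *s z"
  proof (subst Finite_Cartesian_Product.vec_eq_iff, rule allI)
    fix k
    obtain i where i: "i < N" "k = h i"
      using bij_betw_lessThan_obtain_index[OF h] N_def by metis
    have "((\<chi> i j. complex_of_real (M $ i $ j)) *v z) $ k
        = (\<Sum>j<N. complex_of_real (M $ h i $ h j) * vec_index v j)"
      unfolding matrix_vector_mult_def i(2) sum_UNIV_reindex[OF h] N_def[symmetric]
      using z by simp
    also have "\<dots> = vec_index (A *\<^sub>v v) i"
      using i v(1) unfolding A_def by (simp add: scalar_prod_def lessThan_atLeast0)
    also have "\<dots> = (l *s z) $ k"
      unfolding v(3) using i v(1) z by simp
    finally show "((\<chi> i j. complex_of_real (M $ i $ j)) *v z) $ k = (l *s z) $ k" .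
  qed
  ultimately show ?thesis
    using hur unfolding hurwitz_def by blast
qed

lemma symmetric_lyapunov_pos_def:
  fixes M S :: "real^'n^'n"
  assumes hur: "hurwitz M" and sym: "\<And>i j. S $ i $ j = S $ j $ i"
    and lyap: "\<And>y. y \<noteq> 0 \<Longrightarrow> quad (S ** M) y < 0" and "x \<noteq> 0"
  shows "quad S x > 0"
proof -
  obtain h where h: "bij_betw h {..<CARD('n)} (UNIV::'n set)"
    using ex_bij_betw_nat_finite[of "UNIV::'n set"] by (auto simp: lessThan_atLeast0)
  define Sc where "Sc = (\<lambda>i j. complex_of_real (S $ h i $ h j))"
  define Mc where "Mc = (\<lambda>i j. complex_of_real (M $ h i $ h j))"
  define xc where "xc = (\<lambda>i. complex_of_real (x $ h i))"
  have Sc_herm: "Sc j i = cnj (Sc i j)" for i j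
    unfolding Sc_def by (simp only: complex_cnj_complex_of_real sym[of "h i" "h j"])
  have Sc_lyap: "Re (sesq_form CARD('n) Sc u (mat_app CARD('n) Mc u)) < 0"
    if "\<exists>i<CARD('n). u i \<noteq> 0" for u
    unfolding Sc_def Mc_def using h lyap that by (rule reindexed_lyapunov_neg)
  have eig: "Re l < 0" if "eigenvalue (Matrix.mat CARD('n) CARD('n) (\<lambda>(i,j). Mc i j)) l" for l
    using that unfolding Mc_def by (rule hurwitz_eigenvalue_Re_neg[OF hur h])
  have xc: "\<exists>i<CARD('n). xc i \<noteq> 0"
  proof -
    obtain k where "x $ k \<noteq> 0"
      using \<open>x \<noteq> 0\<close> by (metis Finite_Cartesian_Product.vec_eq_iff zero_index)
    moreover obtain i where "i < CARD('n)" "k = h i"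
      using bij_betw_lessThan_obtain_index[OF h] by metis
    ultimately show ?thesis
      unfolding xc_def by auto
  qed
  have "Re (sesq_form CARD('n) Sc xc xc) > 0"
    by (rule hermitian_lyapunov_pos[OF eig Sc_herm Sc_lyap xc])
  then show ?thesis
    unfolding Sc_def xc_def Re_sesq_form_reindex[OF h]
    by (simp add: vec_of_fun_comp_eq[OF h] vec_of_fun_zero quad_def)
qed

lemma lyapunov_pos_def:
  fixes M P :: "real^'n^'n"
  assumes hur: "hurwitz M"
    and lyap: "\<And>x. x \<noteq> 0 \<Longrightarrow> quad (transpose M ** P + P ** M) x < 0"
    and "x \<noteq> 0"
  shows "quad P x > 0"
proof -
  define S where "S = P + transpose P"
  have S_sym: "S $ i $ j = S $ j $ i" for i j
    by (simp add: S_def transpose_def)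
  have quad_SM: "quad (S ** M) y = quad (transpose M ** P + P ** M) y" for y
    unfolding quad_add unfolding quad_def matrix_vector_mul_assoc[symmetric] S_def
      matrix_vector_mult_add_rdistrib inner_add_right inner_transpose_matrix
    by (simp add: inner_commute)
  have "quad (S ** M) y < 0" if "y \<noteq> 0" for y
    unfolding quad_SM using lyap[OF that] .
  then have "quad S x > 0"
    by (rule symmetric_lyapunov_pos_def[OF hur S_sym _ \<open>x \<noteq> 0\<close>])
  moreover have "quad S x = 2 * quad P x"
    by (simp add: S_def quad_add quad_transpose)
  ultimately show ?thesis by simp
qed

lemma lyapunov_equation_quad_neg:
  fixes M P Q :: "real^'n^'n" and F :: "real^'n^'m" and R :: "real^'m^'m"
  assumes eq: "transpose M ** P + P ** M + Q + transpose F ** R ** F = 0"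
    and "pos_def_mat Q" "pos_def_mat R" "v \<noteq> 0"
  shows "quad (transpose M ** P + P ** M) v < 0"
proof -
  have "quad (transpose M ** P + P ** M + Q + transpose F ** R ** F) v = 0"
    unfolding eq by (simp add: quad_def)
  then have "quad (transpose M ** P + P ** M) v + quad Q v + quad R (F *v v) = 0"
    by (simp only: quad_add quad_transpose_mult)
  moreover have "0 < quad Q v"
    using assms(2,4) unfolding pos_def_mat_def by blast
  moreover have "0 \<le> quad R (F *v v)"
    using assms(3) by (rule pos_def_mat_quad_nonneg)
  ultimately show ?thesis by linarith
qed

lemma quad_scaleR: "quad P (c *\<^sub>R x) = c * c * quad P x"
  unfolding quad_def by (simp add: matrix_vector_mult_scaleR)

lemma continuous_on_quad: "continuous_on S (quad P)"
  unfolding quad_def[abs_def]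
  by (intro continuous_on_inner continuous_on_id
      bounded_linear.continuous_on[OF matrix_vector_mul_bounded_linear])

lemma quad_ge_norm_sq:
  fixes P :: "real^'n^'n"
  assumes pos: "\<And>x. x \<noteq> 0 \<Longrightarrow> quad P x > 0"
  obtains a where "a > 0" "\<And>x. a * (norm x)\<^sup>2 \<le> quad P x"
proof -
  have sphere: "sphere (0::real^'n) 1 \<noteq> {}"
    using vector_choose_size[of 1] by (auto simp: sphere_def)
  obtain e where e: "e \<in> sphere 0 1" and min: "\<And>y. y \<in> sphere 0 1 \<Longrightarrow> quad P e \<le> quad P y"
    using continuous_attains_inf[OF compact_sphere sphere continuous_on_quad] by blast
  have bound: "quad P e * (norm x)\<^sup>2 \<le> quad P x" for x
  proof (cases "x = 0")
    case True
    then show ?thesis by (simp add: quad_def)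
  next
    case False
    have "quad P e \<le> quad P ((1 / norm x) *\<^sub>R x)"
      using False by (intro min) simp
    then have "quad P e * (norm x)\<^sup>2 \<le> quad P ((1 / norm x) *\<^sub>R x) * (norm x)\<^sup>2"
      by (rule mult_right_mono) simp
    also have "\<dots> = quad P x"
      using False by (simp add: quad_scaleR power2_eq_square)
    finally show ?thesis .
  qed
  have "quad P e > 0"
    using e by (intro pos) auto
  then show thesis
    using bound by (rule that)
qed

lemma quad_le_norm_sq:
  fixes P :: "real^'n^'n"
  obtains b where "b > 0" "\<And>x. quad P x \<le> b * (norm x)\<^sup>2"
proof -
  obtain b where b: "b > 0" "\<And>x. norm (P *v x) \<le> norm x * b"
    using bounded_linear.pos_bounded[OF matrix_vector_mul_bounded_linear[of P]] by blast
  have "quad P x \<le> b * (norm x)\<^sup>2" for x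
  proof -
    have "quad P x \<le> norm x * norm (P *v x)"
      unfolding quad_def by (rule norm_cauchy_schwarz)
    also have "\<dots> \<le> norm x * (norm x * b)"
      by (rule mult_left_mono[OF b(2)]) simp
    finally show ?thesis by (simp add: power2_eq_square mult_ac)
  qed
  then show thesis using that b(1) by blast
qed

lemma matrix_vector_norm_le:
  fixes M :: "real^'n^'m"
  obtains b where "b > 0" "\<And>x. norm (M *v x) \<le> b * norm x"
  using bounded_linear.pos_bounded[OF matrix_vector_mul_bounded_linear[of M]]
  by (metis mult.commute)

lemma norm_le_if_quad_le:
  assumes "p1 > 0" and lower: "p1 * (norm v)\<^sup>2 \<le> quad P v" and upper: "quad P w \<le> p2 * (norm w)\<^sup>2"
    and "quad P v \<le> quad P w"
  shows "norm v \<le> sqrt (p2 / p1) * norm w"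
proof -
  have "(norm v)\<^sup>2 \<le> p2 / p1 * (norm w)\<^sup>2"
    using assms by (simp add: field_simps)
  then have "norm v \<le> sqrt (p2 / p1 * (norm w)\<^sup>2)"
    by (rule real_le_rsqrt)
  also have "\<dots> = sqrt (p2 / p1) * norm w"
    unfolding real_sqrt_mult by simp
  finally show ?thesis .
qed

section \<open>Costs along held-input trajectories\<close>

lemma Jk_nonneg:
  assumes "pos_def_mat Q" "pos_def_mat R"
  shows "0 \<le> Jk Q R F y \<xi>"
proof (cases "(\<lambda>s. quad Q (y s) + quad R (F *v y 0)) integrable_on {0..\<xi>}")
  case True
  then show ?thesis
    unfolding Jk_def using assms by (intro integral_nonneg) (auto intro: add_nonneg_nonneg pos_def_mat_quad_nonneg)
next
  case False
  then show ?thesis by (simp add: Jk_def not_integrable_integral)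
qed

lemma held_input_traj_quad_continuous:
  assumes "held_input_traj A B u y 0 d"
  shows "continuous_on {0..d} (\<lambda>s. quad Q (y s))"
proof -
  have "continuous_on {0..d} y"
    using assms unfolding held_input_traj_def by (auto intro!: continuous_on_vector_derivative)
  then show ?thesis
    by (intro continuous_on_compose2[OF continuous_on_quad]) auto
qed

lemma Jk_held_input:
  assumes "held_input_traj A B (F *v y 0) y 0 d" "0 \<le> d"
  shows "Jk Q R F y d = integral {0..d} (\<lambda>s. quad Q (y s)) + d * quad R (F *v y 0)"
proof -
  have "(\<lambda>s. quad Q (y s)) integrable_on {0..d}"
    using held_input_traj_quad_continuous[OF assms(1)] by (rule integrable_continuous_interval)
  then show ?thesis
    unfolding Jk_def using assms(2) by (simp add: integral_add integrable_const_ivl content_real)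
qed

lemma held_input_traj_displacement:
  fixes A :: "real^'n^'n" and B :: "real^'m^'n"
  assumes traj: "held_input_traj A B u y 0 d"
    and A: "\<And>v. norm (A *v v) \<le> a * norm v" "a \<ge> 0" and B: "\<And>v. norm (B *v v) \<le> b * norm v"
    and K: "\<And>s. s \<in> {0..d} \<Longrightarrow> norm (y s) \<le> K"
    and s: "s \<in> {0..d}"
  shows "norm (y s - y 0) \<le> (a * K + b * norm u) * s"
proof -
  have "norm (y s - y 0) \<le> (a * K + b * norm u) * norm (s - 0)"
  proof (rule differentiable_bound[where f' = "\<lambda>r h. h *\<^sub>R (A *v y r + B *v u)"])
    show "(y has_derivative (\<lambda>h. h *\<^sub>R (A *v y r + B *v u))) (at r within {0..d})" if "r \<in> {0..d}" for r
      using traj that unfolding held_input_traj_def has_vector_derivative_def by blast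
    show "onorm (\<lambda>h. h *\<^sub>R (A *v y r + B *v u)) \<le> a * K + b * norm u" if "r \<in> {0..d}" for r
    proof -
      have "norm (A *v y r) \<le> a * K"
        using A(1)[of "y r"] mult_left_mono[OF K[OF that] A(2)] by linarith
      then have "norm (A *v y r + B *v u) \<le> a * K + b * norm u"
        using norm_triangle_ineq[of "A *v y r" "B *v u"] B[of u] by linarith
      then show ?thesis
        by (simp add: onorm_scaleR_left[OF bounded_linear_ident] onorm_id)
    qed
  qed (use s in auto)
  then show ?thesis using s by simp
qed

lemma exists_sample_interval:
  fixes t :: "nat \<Rightarrow> real"
  assumes "t 0 = 0" "filterlim t at_top sequentially" "0 \<le> s"
  obtains k where "t k \<le> s" "s < t (Suc k)"
proof -
  have "eventually (\<lambda>n. s < t n) sequentially"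
    using assms(2) by (simp add: filterlim_at_top_dense)
  then obtain n where "s < t n"
    by (auto simp: eventually_sequentially)
  then obtain k where "\<forall>i\<le>k. \<not> s < t i" "s < t (Suc k)"
    using ex_least_nat_less[of "\<lambda>n. s < t n"] assms(1,3) by auto
  then show thesis
    using that by (meson le_refl not_less)
qed

lemma summable_if_summable_min:
  fixes d :: "nat \<Rightarrow> real"
  assumes "\<And>k. 0 < d k" "0 < h" "summable (\<lambda>k. min (d k) h)"
  shows "summable d"
proof -
  have "eventually (\<lambda>k. min (d k) h < h) sequentially"
    using summable_LIMSEQ_zero[OF assms(3)] assms(2) by (intro order_tendstoD(2)) auto
  then have "eventually (\<lambda>k. min (d k) h = d k) sequentially"
    by (rule eventually_mono) (auto simp: min_def split: if_splits)
  then have "summable (\<lambda>k. min (d k) h) = summable d"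
    by (rule summable_cong)
  then show ?thesis
    using assms(3) by simp
qed

lemma summable_increments_not_unbounded:
  fixes t :: "nat \<Rightarrow> real"
  assumes "summable (\<lambda>k. t (Suc k) - t k)"
  shows "\<not> filterlim t at_top sequentially"
proof
  assume "filterlim t at_top sequentially"
  moreover have "(\<lambda>n. (t n - t 0) + t 0) \<longlonglongrightarrow> suminf (\<lambda>k. t (Suc k) - t k) + t 0"
    using summable_LIMSEQ[OF assms] unfolding sum_lessThan_telescope by (intro tendsto_add) auto
  ultimately show False
    by (intro filterlim_at_top_nhds) auto
qed

lemma not_summable_step_costs:
  fixes t J :: "nat \<Rightarrow> real"
  assumes t: "\<And>k. t k < t (Suc k)" "filterlim t at_top sequentially"
    and c: "0 < c" and h: "0 < h" and lower: "\<And>k. c * min (t (Suc k) - t k) h \<le> J k"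
  shows "\<not> summable J"
proof
  assume "summable J"
  define \<delta> where "\<delta> k = t (Suc k) - t k" for k
  have \<delta>: "0 < \<delta> k" for k
    unfolding \<delta>_def using t(1)[of k] by linarith
  have nonneg: "0 \<le> c * min (\<delta> k) h" for k
    using mult_nonneg_nonneg[OF less_imp_le[OF c] min.boundedI[OF less_imp_le[OF \<delta>] less_imp_le[OF h]]] .
  have "summable (\<lambda>k. c * min (\<delta> k) h)"
  proof (rule summable_comparison_test'[OF \<open>summable J\<close>])
    show "norm (c * min (\<delta> k) h) \<le> J k" for k
      unfolding real_norm_def abs_of_nonneg[OF nonneg] unfolding \<delta>_def by (rule lower)
  qed
  then have "summable (\<lambda>k. min (\<delta> k) h)"
    by (rule summable_mult_D) (use c in simp)
  then have "summable \<delta>"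
    by (rule summable_if_summable_min[OF \<delta> h])
  then have "summable (\<lambda>k. t (Suc k) - t k)"
    unfolding \<delta>_def .
  with summable_increments_not_unbounded show False
    using t(2) by blast
qed

lemma integral_ge_on_initial_segment:
  fixes f :: "real \<Rightarrow> real"
  assumes "continuous_on {0..d} f" "\<And>s. s \<in> {0..d} \<Longrightarrow> 0 \<le> f s"
    and "\<And>s. s \<in> {0..e} \<Longrightarrow> m \<le> f s" "0 \<le> e" "e \<le> d"
  shows "m * e \<le> integral {0..d} f"
proof -
  have int_d: "f integrable_on {0..d}"
    using assms(1) by (rule integrable_continuous_interval)
  then have int_e: "f integrable_on {0..e}"
    by (rule integrable_on_subinterval) (use assms(5) in auto)
  have "m * e = integral {0..e} (\<lambda>s. m)"
    using assms(4) by simp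
  also have "\<dots> \<le> integral {0..e} f"
    using assms(3) int_e by (intro integral_le) auto
  also have "\<dots> \<le> integral {0..d} f"
    using assms(2,5) int_e int_d by (intro integral_subset_le) auto
  finally show ?thesis .
qed

lemma small_input_state_cost:
  fixes A :: "real^'n^'n" and B :: "real^'m^'n"
  assumes traj: "held_input_traj A B u y 0 d" and Q: "pos_def_mat Q"
    and q: "\<And>v. q * (norm v)\<^sup>2 \<le> quad Q v"
    and A: "\<And>v. norm (A *v v) \<le> a * norm v" and B: "\<And>v. norm (B *v v) \<le> b * norm v"
    and y0: "l \<le> norm (y 0)" and yK: "\<And>s. s \<in> {0..d} \<Longrightarrow> norm (y s) \<le> K"
    and nonneg: "0 \<le> q" "0 \<le> a" "0 \<le> b" "0 \<le> K"
    and e: "0 \<le> e" "e \<le> d" and drift: "(a * K + b * norm u) * e \<le> l / 2"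
  shows "q * l\<^sup>2 / 4 * e \<le> integral {0..d} (\<lambda>s. quad Q (y s))"
proof (rule integral_ge_on_initial_segment[OF held_input_traj_quad_continuous[OF traj] _ _ e])
  show "0 \<le> quad Q (y s)" for s
    using Q by (rule pos_def_mat_quad_nonneg)
  have "0 \<le> (a * K + b * norm u) * e"
    using nonneg e by simp
  then have "0 \<le> l"
    using drift by linarith
  show "q * l\<^sup>2 / 4 \<le> quad Q (y s)" if s: "s \<in> {0..e}" for s
  proof -
    have "norm (y s - y 0) \<le> (a * K + b * norm u) * s"
      using held_input_traj_displacement[OF traj A nonneg(2) B yK] s e by auto
    also have "\<dots> \<le> (a * K + b * norm u) * e"
      using s nonneg by (intro mult_left_mono) auto
    finally have "l / 2 \<le> norm (y s)"
      using drift y0 norm_triangle_ineq2[of "y 0" "y s"] by (simp add: norm_minus_commute)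
    then have "q * (l / 2)\<^sup>2 \<le> q * (norm (y s))\<^sup>2"
      using \<open>0 \<le> l\<close> nonneg(1) by (intro mult_left_mono power_mono) auto
    then show ?thesis
      using q[of "y s"] by (simp add: power_divide)
  qed
qed

lemma large_input_cost_bound:
  fixes r b l e h d v :: real
  assumes "0 < r" "0 < b" "0 < e" "e \<le> h" "e \<le> d" "0 < l" "l / 4 < b * v * e" "0 \<le> v"
  shows "r * l\<^sup>2 / (16 * b\<^sup>2 * h\<^sup>2) * e \<le> d * (r * v\<^sup>2)"
proof -
  have h: "0 < h" using assms by simp
  have "(l / 4)\<^sup>2 \<le> (b * v * e)\<^sup>2"
    using assms by (intro power_mono) auto
  then have l2: "l\<^sup>2 \<le> 16 * b\<^sup>2 * v\<^sup>2 * e\<^sup>2"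
    by (simp add: power_mult_distrib power_divide)
  have "r * l\<^sup>2 / (16 * b\<^sup>2 * h\<^sup>2) * e \<le> r * (16 * b\<^sup>2 * v\<^sup>2 * e\<^sup>2) / (16 * b\<^sup>2 * h\<^sup>2) * e"
    using l2 assms h by (intro mult_right_mono divide_right_mono mult_left_mono) auto
  also have "\<dots> = r * v\<^sup>2 * e * (e\<^sup>2 / h\<^sup>2)"
    using assms h by (simp add: field_simps power2_eq_square)
  also have "\<dots> \<le> r * v\<^sup>2 * e"
  proof -
    have "e\<^sup>2 / h\<^sup>2 \<le> 1"
      using assms h by (simp add: power_mono)
    then show ?thesis
      using mult_left_mono[of "e\<^sup>2 / h\<^sup>2" 1 "r * v\<^sup>2 * e"] assms by simp
  qed
  also have "\<dots> \<le> d * (r * v\<^sup>2)"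
    using assms by (simp add: mult_right_mono mult.commute mult.left_commute)
  finally show ?thesis .
qed

(* Either the input is small, and the state keeps distance l/2 from the origin for the time
   min d h, or it is large and already the input cost is large. *)
lemma held_input_cost_ge:
  fixes A :: "real^'n^'n" and B :: "real^'m^'n" and Q :: "real^'n^'n" and R :: "real^'m^'m"
  assumes Q: "pos_def_mat Q" and R: "pos_def_mat R"
    and q: "0 < q" "\<And>v. q * (norm v)\<^sup>2 \<le> quad Q v" and r: "0 < r" "\<And>v. r * (norm v)\<^sup>2 \<le> quad R v"
    and a: "0 < a" "\<And>v. norm (A *v v) \<le> a * norm v" and b: "0 < b" "\<And>v. norm (B *v v) \<le> b * norm v"
    and l: "0 < l" and K: "0 \<le> K" and h: "0 < h" and drift: "a * K * h \<le> l / 4"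
    and traj: "held_input_traj A B (F *v y 0) y 0 d" and d: "0 < d"
    and y0: "l \<le> norm (y 0)" and yK: "\<And>s. s \<in> {0..d} \<Longrightarrow> norm (y s) \<le> K"
  shows "min (q * l\<^sup>2 / 4) (r * l\<^sup>2 / (16 * b\<^sup>2 * h\<^sup>2)) * min d h \<le> Jk Q R F y d"
proof -
  define u where "u = F *v y 0"
  define e where "e = min d h"
  define c where "c = min (q * l\<^sup>2 / 4) (r * l\<^sup>2 / (16 * b\<^sup>2 * h\<^sup>2))"
  have e: "0 < e" "e \<le> d" "e \<le> h"
    unfolding e_def using d h by auto
  have J: "Jk Q R F y d = integral {0..d} (\<lambda>s. quad Q (y s)) + d * quad R u"
    unfolding u_def using traj d by (simp add: Jk_held_input)
  have state_cost: "0 \<le> integral {0..d} (\<lambda>s. quad Q (y s))"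
    using Q by (intro integral_nonneg integrable_continuous_interval
        held_input_traj_quad_continuous[OF traj] pos_def_mat_quad_nonneg)
  have input_cost: "0 \<le> d * quad R u"
    using d R by (simp add: pos_def_mat_quad_nonneg)
  have "c * e \<le> Jk Q R F y d"
  proof (cases "b * norm u * e \<le> l / 4")
    case True
    have "a * K * e \<le> a * K * h"
      using e(3) a(1) K by (intro mult_left_mono) auto
    then have "(a * K + b * norm u) * e \<le> a * K * h + l / 4"
      unfolding distrib_right using True by linarith
    then have "q * l\<^sup>2 / 4 * e \<le> integral {0..d} (\<lambda>s. quad Q (y s))"
      using small_input_state_cost[OF traj[folded u_def] Q q(2) a(2) b(2) y0 yK]
        q(1) a(1) b(1) K e drift by simp
    moreover have "c * e \<le> q * l\<^sup>2 / 4 * e"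
      unfolding c_def using e by (intro mult_right_mono) auto
    ultimately show ?thesis
      using J input_cost by linarith
  next
    case False
    have "r * l\<^sup>2 / (16 * b\<^sup>2 * h\<^sup>2) * e \<le> d * (r * (norm u)\<^sup>2)"
      using False by (intro large_input_cost_bound) (use r b e l in auto)
    also have "\<dots> \<le> d * quad R u"
      using r(2)[of u] d by simp
    finally have "r * l\<^sup>2 / (16 * b\<^sup>2 * h\<^sup>2) * e \<le> d * quad R u" .
    moreover have "c * e \<le> r * l\<^sup>2 / (16 * b\<^sup>2 * h\<^sup>2) * e"
      unfolding c_def using e by (intro mult_right_mono) auto
    ultimately show ?thesis
      using J state_cost by linarith
  qed
  then show ?thesis
    unfolding c_def e_def .
qed

lemma held_input_cost_lower_bound:
  fixes A :: "real^'n^'n" and B :: "real^'m^'n" and Q :: "real^'n^'n" and R :: "real^'m^'m"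
  assumes Q: "pos_def_mat Q" and R: "pos_def_mat R" and l: "0 < l" and K: "0 \<le> K"
  obtains c h where "0 < c" "0 < h"
    "\<And>F y d. held_input_traj A B (F *v y 0) y 0 d \<Longrightarrow> 0 < d \<Longrightarrow> l \<le> norm (y 0) \<Longrightarrow>
       (\<And>s. s \<in> {0..d} \<Longrightarrow> norm (y s) \<le> K) \<Longrightarrow> c * min d h \<le> Jk Q R F y d"
proof -
  obtain q where q: "0 < q" "\<And>v. q * (norm v)\<^sup>2 \<le> quad Q v"
    using quad_ge_norm_sq Q unfolding pos_def_mat_def by metis
  obtain r where r: "0 < r" "\<And>v. r * (norm v)\<^sup>2 \<le> quad R v"
    using quad_ge_norm_sq R unfolding pos_def_mat_def by metis
  obtain a where a: "0 < a" "\<And>v. norm (A *v v) \<le> a * norm v"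
    using matrix_vector_norm_le[of A] by blast
  obtain b where b: "0 < b" "\<And>v. norm (B *v v) \<le> b * norm v"
    using matrix_vector_norm_le[of B] by blast
  define h where "h = l / (4 * a * (K + 1))"
  have h: "0 < h"
    unfolding h_def using l a K by simp
  have "a * K * h \<le> a * (K + 1) * h"
    using a h by simp
  also have "\<dots> = l / 4"
    unfolding h_def using a K by (simp add: field_simps add_nonneg_eq_0_iff)
  finally have drift: "a * K * h \<le> l / 4" .
  have "0 < min (q * l\<^sup>2 / 4) (r * l\<^sup>2 / (16 * b\<^sup>2 * h\<^sup>2))"
    using q r l b h by simp
  then show thesis
    using held_input_cost_ge[OF Q R q r a b l K h drift] by (rule that[OF _ h])
qed

section \<open>The sampled closed loop\<close>

lemma P1_feasibleD:
  assumes "P1_feasible A B Q R \<alpha> P xk F \<delta> y"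
  shows "held_input_traj A B (F *v xk) y 0 \<delta>"
    "\<And>\<xi>. \<xi> \<in> {0..\<delta>} \<Longrightarrow> Jk Q R F y \<xi> \<le> \<alpha> * (quad P xk - quad P (y \<xi>))"
  using assms unfolding P1_feasible_def by auto

locale feasible_sampled_loop =
  fixes A :: "real^'n^'n" and B :: "real^'m^'n" and Q :: "real^'n^'n" and R :: "real^'m^'m"
    and \<alpha> :: real and P :: "real^'n^'n"
    and t :: "nat \<Rightarrow> real" and F :: "nat \<Rightarrow> real^'n^'m" and x :: "real \<Rightarrow> real^'n"
  assumes Q_pos: "pos_def_mat Q" and R_pos: "pos_def_mat R" and \<alpha>_pos: "0 < \<alpha>"
    and P_pos: "\<And>v. v \<noteq> 0 \<Longrightarrow> 0 < quad P v"
    and traj: "sample_hold_traj A B t F (x 0) x"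
    and feasible: "\<And>k. P1_feasible A B Q R \<alpha> P (x (t k)) (F k) (t (Suc k) - t k) (\<lambda>s. x (t k + s))"
begin

lemma t_0: "t 0 = 0" and t_strict_mono: "strict_mono t"
  and t_unbounded: "filterlim t at_top sequentially"
  using traj unfolding sample_hold_traj_def by auto

lemma t_less_Suc: "t k < t (Suc k)"
  using t_strict_mono by (simp add: strict_mono_Suc_iff)

lemma t_nonneg: "0 \<le> t k"
  using strict_mono_less_eq[OF t_strict_mono, of 0 k] t_0 by simp

lemma held_input_traj_step: "held_input_traj A B (F k *v x (t k)) (\<lambda>s. x (t k + s)) 0 (t (Suc k) - t k)"
  using P1_feasibleD(1)[OF feasible] .

lemma cost_le_value_decrease:
  "\<xi> \<in> {0..t (Suc k) - t k} \<Longrightarrow>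
     Jk Q R (F k) (\<lambda>s. x (t k + s)) \<xi> \<le> \<alpha> * (quad P (x (t k)) - quad P (x (t k + \<xi>)))"
  using P1_feasibleD(2)[OF feasible] .

lemma value_decreasing_on_step:
  assumes "\<xi> \<in> {0..t (Suc k) - t k}"
  shows "quad P (x (t k + \<xi>)) \<le> quad P (x (t k))"
proof -
  have "0 \<le> \<alpha> * (quad P (x (t k)) - quad P (x (t k + \<xi>)))"
    using cost_le_value_decrease[OF assms] Jk_nonneg[OF Q_pos R_pos, of "F k" "\<lambda>s. x (t k + s)" \<xi>] by linarith
  then show ?thesis
    using \<alpha>_pos by (simp add: zero_le_mult_iff)
qed

lemma sample_values_decseq: "decseq (\<lambda>k. quad P (x (t k)))"
proof (rule decseq_SucI)
  fix k
  have "t (Suc k) - t k \<in> {0..t (Suc k) - t k}"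
    using t_less_Suc[of k] by simp
  from value_decreasing_on_step[OF this]
  show "quad P (x (t (Suc k))) \<le> quad P (x (t k))"
    by (simp only: add.commute[of "t k"] diff_add_cancel)
qed

lemma value_le_sample_value:
  assumes "t j \<le> s"
  shows "quad P (x s) \<le> quad P (x (t j))"
proof -
  have "0 \<le> s"
    using t_nonneg[of j] assms by linarith
  then obtain k where k: "t k \<le> s" "s < t (Suc k)"
    using exists_sample_interval[OF t_0 t_unbounded] by blast
  have "j \<le> k"
  proof (rule ccontr)
    assume "\<not> j \<le> k"
    then have "t (Suc k) \<le> t j"
      using strict_mono_less_eq[OF t_strict_mono] by simp
    then show False
      using assms k(2) by simp
  qed
  have "quad P (x s) = quad P (x (t k + (s - t k)))"
    by simp
  also have "\<dots> \<le> quad P (x (t k))"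
    using k by (intro value_decreasing_on_step) auto
  also have "\<dots> \<le> quad P (x (t j))"
    using sample_values_decseq \<open>j \<le> k\<close> by (simp add: decseq_def)
  finally show ?thesis .
qed

lemma total_cost_nonneg: "0 \<le> total_cost Q R t F x k"
  unfolding total_cost_def by (rule Jk_nonneg[OF Q_pos R_pos])

lemma total_cost_le: "total_cost Q R t F x k \<le> \<alpha> * (quad P (x (t k)) - quad P (x (t (Suc k))))"
proof -
  have "t (Suc k) - t k \<in> {0..t (Suc k) - t k}"
    using t_less_Suc[of k] by simp
  from cost_le_value_decrease[OF this]
  show ?thesis
    unfolding total_cost_def by (simp only: add.commute[of "t k"] diff_add_cancel)
qed

lemma partial_total_cost_le: "(\<Sum>k<n. total_cost Q R t F x k) \<le> \<alpha> * quad P (x 0)"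
proof -
  have "(\<Sum>k<n. total_cost Q R t F x k) \<le> (\<Sum>k<n. \<alpha> * (quad P (x (t k)) - quad P (x (t (Suc k)))))"
    by (intro sum_mono total_cost_le)
  also have "\<dots> = \<alpha> * (quad P (x 0) - quad P (x (t n)))"
    using sum_lessThan_telescope'[of "\<lambda>k. quad P (x (t k))" n] t_0
    by (simp add: sum_distrib_left[symmetric])
  also have "\<dots> \<le> \<alpha> * quad P (x 0)"
    using \<alpha>_pos P_pos[of "x (t n)"] by (cases "x (t n) = 0") (auto simp: quad_def)
  finally show ?thesis .
qed

lemma summable_total_cost: "summable (total_cost Q R t F x)"
  using total_cost_nonneg partial_total_cost_le by (rule summableI_nonneg_bounded)

lemma suminf_total_cost_le: "(\<Sum>k. total_cost Q R t F x k) \<le> \<alpha> * quad P (x 0)"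
  using summable_total_cost partial_total_cost_le by (rule suminf_le_const)

lemma bounded_state: obtains K where "0 \<le> K" "\<And>s. 0 \<le> s \<Longrightarrow> norm (x s) \<le> K"
proof -
  obtain p1 where p1: "0 < p1" "\<And>v. p1 * (norm v)\<^sup>2 \<le> quad P v"
    using quad_ge_norm_sq[OF P_pos] by blast
  obtain p2 where p2: "0 < p2" "\<And>v. quad P v \<le> p2 * (norm v)\<^sup>2"
    using quad_le_norm_sq by blast
  show thesis
  proof (rule that)
    show "0 \<le> sqrt (p2 / p1) * norm (x 0)"
      using p1(1) p2(1) by simp
    show "norm (x s) \<le> sqrt (p2 / p1) * norm (x 0)" if "0 \<le> s" for s
      using value_le_sample_value[of 0 s] that t_0 by (intro norm_le_if_quad_le[OF p1 p2(2)]) auto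
  qed
qed

lemma step_cost_lower_bound:
  assumes l: "0 < l" and away: "\<And>k. l \<le> norm (x (t k))"
  obtains c h where "0 < c" "0 < h" "\<And>k. c * min (t (Suc k) - t k) h \<le> total_cost Q R t F x k"
proof -
  obtain K where K: "0 \<le> K" "\<And>s. 0 \<le> s \<Longrightarrow> norm (x s) \<le> K"
    using bounded_state by blast
  obtain c h where c: "0 < c" and h: "0 < h"
    and cost: "\<And>G y d. held_input_traj A B (G *v y 0) y 0 d \<Longrightarrow> 0 < d \<Longrightarrow> l \<le> norm (y 0) \<Longrightarrow>
       (\<And>s. s \<in> {0..d} \<Longrightarrow> norm (y s) \<le> K) \<Longrightarrow> c * min d h \<le> Jk Q R G y d"
    using held_input_cost_lower_bound[OF Q_pos R_pos l K(1), of A B] by blast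
  have "c * min (t (Suc k) - t k) h \<le> total_cost Q R t F x k" for k
  proof -
    have traj_k: "held_input_traj A B (F k *v x (t k + 0)) (\<lambda>s. x (t k + s)) 0 (t (Suc k) - t k)"
      using held_input_traj_step[of k] by (simp only: add_0_right)
    have start: "l \<le> norm (x (t k + 0))"
      using away[of k] by (simp only: add_0_right)
    have bounded: "norm (x (t k + s)) \<le> K" if "s \<in> {0..t (Suc k) - t k}" for s
      using K(2)[of "t k + s"] t_nonneg[of k] that by auto
    have "0 < t (Suc k) - t k"
      using t_less_Suc[of k] by linarith
    from cost[of "F k" "\<lambda>s. x (t k + s)" "t (Suc k) - t k", OF traj_k this start bounded]
    show ?thesis
      unfolding total_cost_def .
  qed
  with c h show thesis
    by (rule that)
qed

lemma sample_values_approach_zero: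
  assumes "0 < \<epsilon>"
  shows "\<exists>k. quad P (x (t k)) < \<epsilon>"
proof (rule ccontr)
  assume "\<not> ?thesis"
  then have big: "\<epsilon> \<le> quad P (x (t k))" for k
    by (simp add: not_less)
  obtain p2 where p2: "0 < p2" "\<And>v. quad P v \<le> p2 * (norm v)\<^sup>2"
    using quad_le_norm_sq by blast
  define l where "l = sqrt (\<epsilon> / p2)"
  have l: "0 < l"
    unfolding l_def using assms p2(1) by simp
  have "l \<le> norm (x (t k))" for k
  proof -
    have "\<epsilon> / p2 \<le> (norm (x (t k)))\<^sup>2"
      using big[of k] p2(2)[of "x (t k)"] p2(1) by (simp add: field_simps)
    then show ?thesis
      unfolding l_def by (rule real_le_lsqrt[OF norm_ge_zero])
  qed
  then obtain c h where "0 < c" "0 < h" "\<And>k. c * min (t (Suc k) - t k) h \<le> total_cost Q R t F x k"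
    using step_cost_lower_bound[OF l] by blast
  then show False
    using not_summable_step_costs[OF t_less_Suc t_unbounded] summable_total_cost by blast
qed

lemma state_tendsto_zero: "(x \<longlongrightarrow> 0) at_top"
proof (rule tendstoI)
  fix e :: real
  assume e: "0 < e"
  obtain p1 where p1: "0 < p1" "\<And>v. p1 * (norm v)\<^sup>2 \<le> quad P v"
    using quad_ge_norm_sq[OF P_pos] by blast
  obtain k where k: "quad P (x (t k)) < p1 * e\<^sup>2"
    using sample_values_approach_zero[of "p1 * e\<^sup>2"] p1(1) e by auto
  have "norm (x s) < e" if "t k \<le> s" for s
  proof -
    have "p1 * (norm (x s))\<^sup>2 < p1 * e\<^sup>2"
      using p1(2)[of "x s"] value_le_sample_value[OF that] k by simp
    then have "(norm (x s))\<^sup>2 < e\<^sup>2"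
      using p1(1) by simp
    then show ?thesis
      using e by (simp add: power_less_imp_less_base)
  qed
  then show "eventually (\<lambda>s. dist (x s) 0 < e) at_top"
    unfolding eventually_at_top_linorder by auto
qed

end

lemma nu_le:
  assumes "0 < quad P x0" "J \<le> \<alpha> * quad P x0"
  shows "nu J P x0 \<le> \<alpha> - 1"
  unfolding nu_def pos_divide_le_eq[OF assms(1)] using assms(2) by (simp add: algebra_simps)

theorem theorem2:
  fixes A :: "real^'n^'n" and B :: "real^'m^'n"
    and Q :: "real^'n^'n" and R :: "real^'m^'m"
    and Ft :: "real^'n^'m" and Pt :: "real^'n^'n" and \<alpha> :: real
  assumes "stabilizable A B"
    and "pos_def_mat Q" and "pos_def_mat R"
    and "\<alpha> > 1"
    and "hurwitz (A + B ** Ft)"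
    and "transpose (A + B ** Ft) ** Pt + Pt ** (A + B ** Ft) + Q + transpose Ft ** R ** Ft = 0"
  shows "\<exists>c. \<forall>x0 t F x.
           sample_hold_traj A B t F x0 x \<and>
           (\<forall>k. P1_feasible A B Q R \<alpha> Pt (x (t k)) (F k) (t (Suc k) - t k) (\<lambda>s. x (t k + s)))
           \<longrightarrow> (\<forall>s\<ge>0. norm (x s) \<le> c * norm x0)
             \<and> (x \<longlongrightarrow> 0) at_top
             \<and> summable (total_cost Q R t F x)
             \<and> (x0 \<noteq> 0 \<longrightarrow> nu (\<Sum>k. total_cost Q R t F x k) Pt x0 \<le> \<alpha> - 1)"
proof -
  have Pt_pos: "0 < quad Pt v" if "v \<noteq> 0" for v
    using lyapunov_pos_def[OF assms(5) lyapunov_equation_quad_neg[OF assms(6,2,3)] that] .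
  obtain p1 where p1: "0 < p1" "\<And>v. p1 * (norm v)\<^sup>2 \<le> quad Pt v"
    using quad_ge_norm_sq[OF Pt_pos] by blast
  obtain p2 where p2: "\<And>v. quad Pt v \<le> p2 * (norm v)\<^sup>2"
    using quad_le_norm_sq by blast
  show ?thesis
  proof (rule exI[of _ "sqrt (p2 / p1)"], intro allI impI)
    fix x0 t F x
    assume closed_loop: "sample_hold_traj A B t F x0 x \<and>
      (\<forall>k. P1_feasible A B Q R \<alpha> Pt (x (t k)) (F k) (t (Suc k) - t k) (\<lambda>s. x (t k + s)))"
    then have x0: "x 0 = x0"
      unfolding sample_hold_traj_def by blast
    interpret feasible_sampled_loop A B Q R \<alpha> Pt t F x
      using assms(2-4) Pt_pos closed_loop x0 by unfold_locales auto
    have "\<forall>s\<ge>0. norm (x s) \<le> sqrt (p2 / p1) * norm x0"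
      using value_le_sample_value[of 0] t_0 x0 by (auto intro: norm_le_if_quad_le[OF p1 p2])
    moreover have "x0 \<noteq> 0 \<longrightarrow> nu (\<Sum>k. total_cost Q R t F x k) Pt x0 \<le> \<alpha> - 1"
      using nu_le Pt_pos suminf_total_cost_le x0 by blast
    ultimately show "(\<forall>s\<ge>0. norm (x s) \<le> sqrt (p2 / p1) * norm x0)
        \<and> (x \<longlongrightarrow> 0) at_top \<and> summable (total_cost Q R t F x)
        \<and> (x0 \<noteq> 0 \<longrightarrow> nu (\<Sum>k. total_cost Q R t F x k) Pt x0 \<le> \<alpha> - 1)"
      using state_tendsto_zero summable_total_cost by blast
  qed
qed

end
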